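(* Let $m \le n$, let $1 \le h \le k \le m$, and let $|v\rangle \in \mathcal{H}_n \otimes \mathcal{H}_m$ be a unit vector with $SR(|v\rangle) \le k$. Then there exist nonnegative real constants $d_1,\dots,d_k$ and (not necessarily distinct) unit vectors $|v_1\rangle,\dots,|v_k\rangle \in \mathcal{H}_n\otimes\mathcal{H}_m$ such that: - $\sum_{j=1}^k d_j^2 = h$; - $SR(|v_j\rangle) \le h$ for all $j$; - $h|v\rangle = \sum_{j=1}^k d_j |v_j\rangle$.
   Context: $\mathcal{H}_d = \mathbb{C}^d$ and $m \le n$. $SR(|v\rangle)$ is the Schmidt rank of $|v\rangle$: the least number of terms $|a\rangle\otimes|b\rangle$ needed to write $|v\rangle$ as a linear combination of such terms, equivalently the rank of its $n\times m$ coefficient matrix. *)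

theory Defs
  imports "HOL-Analysis.Analysis"
begin

text \<open>A vector in H_n (x) H_m is represented by its n x m complex coefficient
  matrix (type complex^'m^'n, with n = CARD('n), m = CARD('m)).  The norm of
  this type is the Euclidean (Frobenius) norm, i.e. the Hilbert space norm.\<close>

definition schmidt_rank :: "complex^'m^'n \<Rightarrow> nat" where
  "schmidt_rank v = rank v"

end

theory Submission
  imports Defs
begin

text \<open>Gram--Schmidt gives orthonormal vectors \<open>u\<^sub>0, \<dots>, u\<^sub>k\<^sub>-\<^sub>1\<close> spanning the rows of \<open>v\<close>, and
  projecting every row onto \<open>u\<^sub>i\<close> splits \<open>v = P\<^sub>0 + \<dots> + P\<^sub>k\<^sub>-\<^sub>1\<close> into mutually orthogonal
  pieces of Schmidt rank at most one.  The \<open>k\<close> cyclic windows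
  \<open>S\<^sub>j = P\<^sub>j + P\<^sub>j\<^sub>+\<^sub>1 + \<dots> + P\<^sub>j\<^sub>+\<^sub>h\<^sub>-\<^sub>1\<close> (indices mod \<open>k\<close>) have Schmidt rank at most \<open>h\<close>,
  and every \<open>P\<^sub>i\<close> lies in exactly \<open>h\<close> of them; hence \<open>\<Sum> S\<^sub>j = h v\<close> and, by Pythagoras,
  \<open>\<Sum> \<parallel>S\<^sub>j\<parallel>\<^sup>2 = h \<Sum> \<parallel>P\<^sub>i\<parallel>\<^sup>2 = h\<close>.  Take \<open>d\<^sub>j = \<parallel>S\<^sub>j\<parallel>\<close> and \<open>v\<^sub>j = S\<^sub>j / \<parallel>S\<^sub>j\<parallel>\<close>.\<close>

text \<open>The library's \<open>inner\<close> on \<open>complex^'m\<close> is only its real part,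
  and orthogonality for \<open>inner\<close> is not preserved by complex scalar multiples.\<close>

definition cinner :: "complex^'m \<Rightarrow> complex^'m \<Rightarrow> complex" where
  "cinner x y = (\<Sum>b\<in>UNIV. x$b * cnj (y$b))"

lemma cinner_add_left: "cinner (x + y) z = cinner x z + cinner y z"
  by (simp add: cinner_def distrib_right sum.distrib)

lemma cinner_diff_left: "cinner (x - y) z = cinner x z - cinner y z"
  by (simp add: cinner_def left_diff_distrib sum_subtractf)

lemma cinner_scale_left: "cinner (c *s x) y = c * cinner x y"
  by (simp add: cinner_def sum_distrib_left mult.assoc)

lemma cinner_scale_right: "cinner x (c *s y) = cnj c * cinner x y"
  by (simp add: cinner_def sum_distrib_left algebra_simps)

lemma cinner_sum_left: "cinner (sum f A) y = (\<Sum>a\<in>A. cinner (f a) y)"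
  by (induction A rule: infinite_finite_induct) (auto simp: cinner_add_left cinner_def[of 0])

lemma cinner_commute: "cinner y x = cnj (cinner x y)"
  by (simp add: cinner_def mult.commute)

lemma cinner_self: "cinner x x = complex_of_real ((norm x)\<^sup>2)"
proof -
  have "cinner x x = (\<Sum>b\<in>UNIV. complex_of_real ((cmod (x$b))\<^sup>2))"
    unfolding cinner_def
    by (rule sum.cong) (simp_all add: complex_mult_cnj cmod_power2 flip: of_real_power)
  also have "\<dots> = complex_of_real ((norm x)\<^sup>2)"
    by (simp add: norm_vec_def L2_set_def sum_nonneg)
  finally show ?thesis .
qed

lemma inner_scale_vec_eq_cinner:
  fixes e e' :: "complex^'m"
  shows "inner (c *s e) (c' *s e') = Re (c * cnj c' * cinner e e')"
  unfolding inner_vec_def cinner_def sum_distrib_left Re_sum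
  by (rule sum.cong) (simp_all add: inner_complex_def algebra_simps)

definition corthonormal :: "(complex^'m) set \<Rightarrow> bool" where
  "corthonormal E \<longleftrightarrow>
     (\<forall>e\<in>E. cinner e e = 1) \<and> (\<forall>e\<in>E. \<forall>e'\<in>E. e \<noteq> e' \<longrightarrow> cinner e e' = 0)"

lemma cinner_corthonormal_sum:
  assumes "finite E" "corthonormal E" "e\<^sub>0 \<in> E"
  shows "cinner (\<Sum>e\<in>E. c e *s e) e\<^sub>0 = c e\<^sub>0"
proof -
  have "cinner (\<Sum>e\<in>E. c e *s e) e\<^sub>0 = c e\<^sub>0 * cinner e\<^sub>0 e\<^sub>0 + (\<Sum>e\<in>E-{e\<^sub>0}. c e * cinner e e\<^sub>0)"
    using assms(1,3) by (simp add: cinner_sum_left cinner_scale_left sum.remove cinner_add_left)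
  also have "(\<Sum>e\<in>E-{e\<^sub>0}. c e * cinner e e\<^sub>0) = 0"
    using assms(2,3) by (intro sum.neutral) (auto simp: corthonormal_def)
  finally show ?thesis
    using assms(2,3) by (simp add: corthonormal_def)
qed

lemma corthonormal_span_expansion:
  assumes "finite E" "corthonormal E" "x \<in> vec.span E"
  shows "x = (\<Sum>e\<in>E. cinner x e *s e)"
proof -
  obtain c where c: "x = (\<Sum>e\<in>E. c e *s e)"
    using assms(3) vec.span_finite[OF assms(1)] by auto
  then have "cinner x e = c e" if "e \<in> E" for e
    using cinner_corthonormal_sum[OF assms(1,2) that] by simp
  then show ?thesis
    by (simp add: c cong: sum.cong)
qed

lemma cinner_normalize:
  assumes "y \<noteq> 0"
  defines "u \<equiv> complex_of_real (1 / norm y) *s y"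
  shows "cinner u u = 1" and "y = complex_of_real (norm y) *s u"
proof -
  have "cinner u u = complex_of_real (1 / norm y) * complex_of_real (1 / norm y) * cinner y y"
    by (simp add: u_def cinner_scale_left cinner_scale_right)
  also have "\<dots> = complex_of_real ((1 / norm y)\<^sup>2 * (norm y)\<^sup>2)"
    by (simp only: cinner_self of_real_mult power2_eq_square)
  finally show "cinner u u = 1"
    using assms(1) by (simp add: field_simps)
  show "y = complex_of_real (norm y) *s u"
    using assms(1) by (simp add: u_def vector_smult_assoc flip: of_real_mult)
qed

lemma corthonormal_Gram_Schmidt:
  fixes S :: "(complex^'m) set"
  assumes "finite S"
  shows "\<exists>E. finite E \<and> card E \<le> card S \<and> corthonormal E \<and> S \<subseteq> vec.span E"
  using assms
proof (induction S rule: finite_induct)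
  case empty
  show ?case by (intro exI[of _ "{}"]) (auto simp: corthonormal_def)
next
  case (insert x S)
  then obtain E where E: "finite E" "card E \<le> card S" "corthonormal E" "S \<subseteq> vec.span E"
    by blast
  show ?case
  proof (cases "x \<in> vec.span E")
    case True
    then show ?thesis using E insert by (intro exI[of _ E]) auto
  next
    case False
    define y where "y = x - (\<Sum>e\<in>E. cinner x e *s e)"
    define u where "u = complex_of_real (1 / norm y) *s y"
    have "(\<Sum>e\<in>E. cinner x e *s e) \<in> vec.span E"
      by (intro vec.span_sum vec.span_scale vec.span_base)
    then have "y \<noteq> 0"
      using False by (auto simp: y_def)
    then have uu: "cinner u u = 1" and yu: "y = complex_of_real (norm y) *s u"
      unfolding u_def by (rule cinner_normalize)+
    have "cinner y e = 0" if "e \<in> E" for e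
      using cinner_corthonormal_sum[OF E(1,3) that] by (simp add: y_def cinner_diff_left)
    then have ue: "cinner u e = 0" "cinner e u = 0" if "e \<in> E" for e
      using that cinner_commute[of e u] by (simp_all add: u_def cinner_scale_left)
    then have "u \<notin> E"
      using uu by auto
    moreover have "corthonormal (insert u E)"
      using E(3) uu ue unfolding corthonormal_def by auto
    moreover have "x \<in> vec.span (insert u E)"
    proof -
      have "y \<in> vec.span (insert u E)"
        by (subst yu) (intro vec.span_scale vec.span_base, simp)
      moreover have "(\<Sum>e\<in>E. cinner x e *s e) \<in> vec.span (insert u E)"
        by (intro vec.span_sum vec.span_scale vec.span_base) simp
      ultimately have "y + (\<Sum>e\<in>E. cinner x e *s e) \<in> vec.span (insert u E)"
        by (rule vec.span_add)
      then show ?thesis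
        by (simp add: y_def)
    qed
    moreover have "S \<subseteq> vec.span (insert u E)"
      using E(4) vec.span_mono[of E "insert u E"] by auto
    ultimately show ?thesis
      using E insert by (intro exI[of _ "insert u E"]) auto
  qed
qed

lemma corthonormal_spanning_set_exists:
  fixes S :: "(complex^'m) set"
  obtains E where "finite E" "card E \<le> vec.dim S" "corthonormal E" "S \<subseteq> vec.span E"
proof -
  obtain B where B: "vec.independent B" "S \<subseteq> vec.span B" "card B = vec.dim S"
    using vec.basis_exists[of S] by metis
  obtain E where E: "finite E" "card E \<le> card B" "corthonormal E" "B \<subseteq> vec.span E"
    using corthonormal_Gram_Schmidt[OF vec.finiteI_independent[OF B(1)]] by blast
  have "vec.span B \<subseteq> vec.span E"
    using vec.span_mono[OF E(4)] by (simp only: vec.span_span)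
  then have "S \<subseteq> vec.span E"
    using B(2) by blast
  moreover have "card E \<le> vec.dim S"
    using E(2) B(3) by simp
  ultimately show ?thesis
    using that E(1,3) by blast
qed

lemma corthonormal_padded_frame:
  assumes "finite E" "corthonormal E" "card E \<le> k"
  obtains u :: "nat \<Rightarrow> complex^'m"
  where "\<And>i j. i \<noteq> j \<Longrightarrow> cinner (u i) (u j) = 0"
    and "\<And>x. x \<in> vec.span E \<Longrightarrow> x = (\<Sum>i<k. cinner x (u i) *s u i)"
proof -
  define r where "r = card E"
  obtain g where g: "bij_betw g {..<r} E"
    using ex_bij_betw_nat_finite[OF assms(1)] by (auto simp: r_def lessThan_atLeast0)
  define u where "u i = (if i < r then g i else 0)" for i
  have "cinner (u i) (u j) = 0" if "i \<noteq> j" for i j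
  proof (cases "i < r \<and> j < r")
    case True
    then have "g i \<noteq> g j" "g i \<in> E" "g j \<in> E"
      using g that by (auto simp: bij_betw_def inj_on_def)
    then show ?thesis
      using assms(2) True by (auto simp: u_def corthonormal_def)
  qed (auto simp: u_def cinner_def)
  moreover have "x = (\<Sum>i<k. cinner x (u i) *s u i)" if x: "x \<in> vec.span E" for x
  proof -
    have "(\<Sum>i<k. cinner x (u i) *s u i) = (\<Sum>i<r. cinner x (u i) *s u i)"
      using assms(3) by (intro sum.mono_neutral_right) (auto simp: r_def u_def)
    also have "\<dots> = (\<Sum>i<r. cinner x (g i) *s g i)"
      by (simp add: u_def)
    also have "\<dots> = (\<Sum>e\<in>E. cinner x e *s e)"
      using sum.reindex_bij_betw[OF g] by simp
    also have "\<dots> = x"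
      using corthonormal_span_expansion[OF assms(1,2) x] by simp
    finally show ?thesis ..
  qed
  ultimately show ?thesis
    by (rule that)
qed

lemma norm_axis: "norm (axis i (x::'a::real_normed_vector)) = norm x"
proof -
  have "(\<Sum>j\<in>UNIV. (norm (axis i x $ j))\<^sup>2) = (\<Sum>j\<in>UNIV. if j = i then (norm x)\<^sup>2 else 0)"
    by (rule sum.cong) (auto simp: axis_def)
  then show ?thesis
    by (simp add: norm_vec_def L2_set_def)
qed

lemma schmidt_rank_le_card:
  fixes x :: "complex^'m^'n"
  assumes "finite T" "\<And>a. x $ a \<in> vec.span T"
  shows "schmidt_rank x \<le> card T"
proof -
  have "rows x \<subseteq> vec.span T"
    using assms(2) by (auto simp: rows_def row_def)
  then show ?thesis
    unfolding schmidt_rank_def row_rank_def_gen using vec.dim_le_card[OF _ assms(1)] by blast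
qed

lemma orthogonal_rank_one_decomposition:
  fixes v :: "complex^'m^'n"
  assumes "schmidt_rank v \<le> k"
  obtains P :: "nat \<Rightarrow> complex^'m^'n" and u :: "nat \<Rightarrow> complex^'m"
  where "v = (\<Sum>i<k. P i)" and "\<And>i j. i \<noteq> j \<Longrightarrow> orthogonal (P i) (P j)"
    and "\<And>i a. P i $ a \<in> vec.span {u i}"
proof -
  obtain E where E: "finite E" "card E \<le> vec.dim (rows v)" "corthonormal E" "rows v \<subseteq> vec.span E"
    by (rule corthonormal_spanning_set_exists)
  have "card E \<le> k"
    using E(2) assms by (simp add: schmidt_rank_def row_rank_def_gen)
  then obtain u :: "nat \<Rightarrow> complex^'m"
    where u_orth: "\<And>i j. i \<noteq> j \<Longrightarrow> cinner (u i) (u j) = 0"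
      and u_exp: "\<And>x. x \<in> vec.span E \<Longrightarrow> x = (\<Sum>i<k. cinner x (u i) *s u i)"
    using corthonormal_padded_frame[OF E(1,3)] by metis
  define P where "P i = (\<chi> a. cinner (v $ a) (u i) *s u i)" for i
  have P_component: "P i $ a = cinner (v $ a) (u i) *s u i" for i a
    by (simp add: P_def)
  have "v $ a = (\<Sum>i<k. P i) $ a" for a
  proof -
    have "v $ a \<in> vec.span E"
      using E(4) by (auto simp: rows_def row_def)
    then show ?thesis
      by (simp add: P_def sum_component flip: u_exp)
  qed
  then have "v = (\<Sum>i<k. P i)"
    by (simp add: vec_eq_iff)
  moreover have "orthogonal (P i) (P j)" if "i \<noteq> j" for i j
    unfolding orthogonal_def inner_vec_def[of "P i" "P j"] P_component inner_scale_vec_eq_cinner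
    by (simp add: u_orth[OF that])
  moreover have "P i $ a \<in> vec.span {u i}" for i a
    by (simp add: P_def vec.span_base vec.span_scale)
  ultimately show ?thesis
    by (rule that)
qed

lemma ex_unit_direction_schmidt_rank_le:
  fixes x :: "complex^'m^'n"
  assumes "finite T" "card T \<le> h" "1 \<le> h" "\<And>a. x $ a \<in> vec.span T"
  obtains w where "norm w = 1" "schmidt_rank w \<le> h" "norm x *\<^sub>R w = x"
proof (cases "x = 0")
  case True
  define w :: "complex^'m^'n" where "w = axis undefined (axis undefined 1)"
  have "norm w = 1"
    by (simp add: w_def norm_axis)
  moreover have "schmidt_rank w \<le> card {axis (undefined::'m) (1::complex)}"
    by (rule schmidt_rank_le_card) (auto simp: w_def axis_def vec.span_base vec.span_zero)
  ultimately show ?thesis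
    using that True assms(3) by simp
next
  case False
  define w where "w = (1 / norm x) *\<^sub>R x"
  have "(c *\<^sub>R y) $ a = complex_of_real c *s y $ a" for c and y :: "complex^'m^'n" and a
    by (simp add: vec_eq_iff scaleR_conv_of_real[where 'a=complex])
  then have "w $ a = complex_of_real (1 / norm x) *s x $ a" for a
    by (simp add: w_def)
  then have "w $ a \<in> vec.span T" for a
    using assms(4) by (simp add: vec.span_scale)
  then have "schmidt_rank w \<le> h"
    using schmidt_rank_le_card[OF assms(1)] assms(2) le_trans by blast
  with False show ?thesis
    by (intro that[of w]) (simp_all add: w_def)
qed

lemma sum_rank_one_eq_scaled_unit:
  fixes Q :: "nat \<Rightarrow> complex^'m^'n"
  assumes "1 \<le> h" "\<And>t a. Q t $ a \<in> vec.span {u t}"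
  obtains w where "norm w = 1" "schmidt_rank w \<le> h" "norm (\<Sum>t<h. Q t) *\<^sub>R w = (\<Sum>t<h. Q t)"
proof -
  have "Q t $ a \<in> vec.span (u ` {..<h})" if "t < h" for t a
    using assms(2) vec.span_mono[of "{u t}" "u ` {..<h}"] that by auto
  then have "(\<Sum>t<h. Q t) $ a \<in> vec.span (u ` {..<h})" for a
    unfolding sum_component by (intro vec.span_sum) simp
  moreover have "card (u ` {..<h}) \<le> h"
    using card_image_le[of "{..<h}" u] by simp
  ultimately show ?thesis
    using ex_unit_direction_schmidt_rank_le[OF _ _ assms(1)] that by blast
qed

lemma inj_on_add_mod: "inj_on (\<lambda>i. (i + t) mod k) {..<(k::nat)}"
proof (rule inj_onI)
  fix a b
  assume "a \<in> {..<k}" "b \<in> {..<k}" "(a + t) mod k = (b + t) mod k"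
  moreover have "(a + t) mod k = (b + t) mod k \<longleftrightarrow> a mod k = b mod k"
    unfolding mod_eq_iff_dvd_symdiff_nat by simp
  ultimately show "a = b"
    by simp
qed

lemma bij_betw_add_mod:
  assumes "0 < (k::nat)"
  shows "bij_betw (\<lambda>i. (i + t) mod k) {..<k} {..<k}"
proof -
  have "(\<lambda>i. (i + t) mod k) ` {..<k} \<subseteq> {..<k}"
    using assms by auto
  then show ?thesis
    using inj_on_add_mod by (simp add: bij_betw_def endo_inj_surj)
qed

lemma sum_cyclic_windows:
  fixes f :: "nat \<Rightarrow> 'a::comm_monoid_add"
  assumes "0 < k"
  shows "(\<Sum>j<k. \<Sum>t<h. f ((j + t) mod k)) = (\<Sum>t<h. \<Sum>i<k. f i)"
  using sum.reindex_bij_betw[OF bij_betw_add_mod[OF assms], of f] by (subst sum.swap) simp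

lemma norm_cyclic_window_Pythagorean:
  fixes P :: "nat \<Rightarrow> 'a::real_inner"
  assumes "\<And>i j. i \<noteq> j \<Longrightarrow> orthogonal (P i) (P j)" "h \<le> k"
  shows "(norm (\<Sum>t<h. P ((j + t) mod k)))\<^sup>2 = (\<Sum>t<h. (norm (P ((j + t) mod k)))\<^sup>2)"
proof (rule norm_sum_Pythagorean)
  have "inj_on (\<lambda>t. (t + j) mod k) {..<h}"
    using inj_on_subset[OF inj_on_add_mod] assms(2) by auto
  then show "pairwise (\<lambda>t t'. orthogonal (P ((j + t) mod k)) (P ((j + t') mod k))) {..<h}"
    using assms(1) by (auto simp: pairwise_def inj_on_def add.commute[of j])
qed simp

theorem lemma4p12:
  fixes v :: "complex^'m^'n" and h k :: nat
  assumes "CARD('m) \<le> CARD('n)"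
    and "1 \<le> h" and "h \<le> k" and "k \<le> CARD('m)"
    and "norm v = 1"
    and "schmidt_rank v \<le> k"
  shows "\<exists>(d :: nat \<Rightarrow> real) (w :: nat \<Rightarrow> complex^'m^'n).
           (\<forall>j\<in>{1..k}. 0 \<le> d j \<and> norm (w j) = 1 \<and> schmidt_rank (w j) \<le> h)
         \<and> (\<Sum>j=1..k. (d j)^2) = real h
         \<and> real h *\<^sub>R v = (\<Sum>j=1..k. d j *\<^sub>R w j)"
proof -
  have "0 < k"
    using assms(2,3) by linarith
  obtain P u where v_sum: "v = (\<Sum>i<k. P i)"
    and P_orth: "\<And>i j. i \<noteq> j \<Longrightarrow> orthogonal (P i) (P j)"
    and P_rows: "\<And>i a. P i $ a \<in> vec.span {u i}"
    using orthogonal_rank_one_decomposition[OF assms(6)] by metis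
  define S where "S j = (\<Sum>t<h. P ((j + t) mod k))" for j
  have "\<exists>w. norm w = 1 \<and> schmidt_rank w \<le> h \<and> norm (S j) *\<^sub>R w = S j" for j
    using sum_rank_one_eq_scaled_unit[OF assms(2), of "\<lambda>t. P ((j + t) mod k)"] P_rows
    unfolding S_def by metis
  then obtain W where W: "\<And>j. norm (W j) = 1 \<and> schmidt_rank (W j) \<le> h \<and> norm (S j) *\<^sub>R W j = S j"
    by metis
  have sum_S: "(\<Sum>j<k. S j) = real h *\<^sub>R v"
    unfolding S_def v_sum sum_cyclic_windows[OF \<open>0 < k\<close>]
    by (simp only: sum_constant_scaleR card_lessThan)
  have "(\<Sum>i<k. (norm (P i))\<^sup>2) = 1"
    using norm_sum_Pythagorean[of "{..<k}" P] P_orth assms(5) by (simp add: v_sum pairwise_def)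
  moreover have "(norm (S j))\<^sup>2 = (\<Sum>t<h. (norm (P ((j + t) mod k)))\<^sup>2)" for j
    unfolding S_def by (rule norm_cyclic_window_Pythagorean[OF P_orth assms(3)])
  ultimately have sum_norm_S: "(\<Sum>j<k. (norm (S j))\<^sup>2) = real h"
    using sum_cyclic_windows[OF \<open>0 < k\<close>, of "\<lambda>i. (norm (P i))\<^sup>2" h] by simp
  show ?thesis
    using W sum_S sum_norm_S
    by (intro exI[of _ "\<lambda>j. norm (S (j - 1))"] exI[of _ "\<lambda>j. W (j - 1)"])
      (simp add: sum.atLeast1_atMost_eq)
qed

end
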